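(* For every $r>0$, every nonzero $\vec\theta\in\mathbb C^m$ and every $N\ge0$, there exists $\eta\in\mathrm{Sqz}^m$ such that \[{}^t(G_\eta\vec\mu_{\vec\theta})\,\Sigma_{\eta,N}^{-1}\,(G_\eta\vec\mu_{\vec\theta})=\frac{4r^2\|\vec\theta\|^2}{(2N+1)r^2+1}.\]
   Context: $\mathrm{Sqz}^m$ is the set of complex $2m\times2m$ matrices $\eta=\begin{pmatrix}A&S\\ \bar S&\bar A\end{pmatrix}$ with $A\in\mathbb C^{m\times m}$ anti-hermitian ($A^*=-A$) and $S\in\mathbb C^{m\times m}$ symmetric. For $\vec\theta\in\mathbb C^m$, $\vec\mu_{\vec\theta}=({}^t\mathrm{Re}\,\vec\theta,{}^t\mathrm{Im}\,\vec\theta)^t\in\mathbb R^{2m}$. Further \[G_\eta=\exp\begin{pmatrix}\mathrm{Re}A+\mathrm{Re}S&-\mathrm{Im}A+\mathrm{Im}S\\ \mathrm{Im}A+\mathrm{Im}S&\mathrm{Re}A-\mathrm{Re}S\end{pmatrix},\qquad \Sigma_{\eta,N}=\frac{2N+1}{4}G_\eta\,{}^tG_\eta+\frac14I_{2m}.\] *)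

theory Defs
  imports "HOL-Analysis.Analysis"
begin

text \<open>Real 2m x 2m matrices are indexed by the type 'm + 'm:
  Inl i is the i-th "real part" coordinate, Inr i the i-th "imaginary part" coordinate.\<close>

primrec mat_pow :: "'a::semiring_1 ^'n::finite^'n \<Rightarrow> nat \<Rightarrow> 'a^'n^'n" where
  "mat_pow M 0 = mat 1"
| "mat_pow M (Suc k) = M ** mat_pow M k"

definition mat_exp :: "real^'n::finite^'n \<Rightarrow> real^'n^'n" where
  "mat_exp M = (\<Sum>k. (1 / fact k) *\<^sub>R mat_pow M k)"

definition block :: "'a^'m::finite^'m \<Rightarrow> 'a^'m^'m \<Rightarrow> 'a^'m^'m \<Rightarrow> 'a^'m^'m
                     \<Rightarrow> 'a^('m + 'm)^('m + 'm)" where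
  "block P Q R T = (\<chi> a b. case a of
       Inl i \<Rightarrow> (case b of Inl j \<Rightarrow> P $ i $ j | Inr j \<Rightarrow> Q $ i $ j)
     | Inr i \<Rightarrow> (case b of Inl j \<Rightarrow> R $ i $ j | Inr j \<Rightarrow> T $ i $ j))"

definition anti_hermitian :: "complex^'m::finite^'m \<Rightarrow> bool" where
  "anti_hermitian A \<longleftrightarrow> (\<forall>i j. cnj (A $ j $ i) = - (A $ i $ j))"

definition symmetric_mat :: "'a^'m::finite^'m \<Rightarrow> bool" where
  "symmetric_mat S \<longleftrightarrow> transpose S = S"

definition cnj_mat :: "complex^'m::finite^'m \<Rightarrow> complex^'m^'m" where
  "cnj_mat A = (\<chi> i j. cnj (A $ i $ j))"

definition Re_mat :: "complex^'m::finite^'m \<Rightarrow> real^'m^'m" where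
  "Re_mat A = (\<chi> i j. Re (A $ i $ j))"

definition Im_mat :: "complex^'m::finite^'m \<Rightarrow> real^'m^'m" where
  "Im_mat A = (\<chi> i j. Im (A $ i $ j))"

definition Sqz :: "(complex^('m::finite + 'm)^('m + 'm)) set" where
  "Sqz = {block A S (cnj_mat S) (cnj_mat A) | A S. anti_hermitian A \<and> symmetric_mat S}"

definition blkA :: "complex^('m::finite + 'm)^('m + 'm) \<Rightarrow> complex^'m^'m" where
  "blkA \<eta> = (\<chi> i j. \<eta> $ Inl i $ Inl j)"

definition blkS :: "complex^('m::finite + 'm)^('m + 'm) \<Rightarrow> complex^'m^'m" where
  "blkS \<eta> = (\<chi> i j. \<eta> $ Inl i $ Inr j)"

definition G :: "complex^('m::finite + 'm)^('m + 'm) \<Rightarrow> real^('m + 'm)^('m + 'm)" where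
  "G \<eta> = (let A = blkA \<eta>; S = blkS \<eta> in
     mat_exp (block (Re_mat A + Re_mat S) (- Im_mat A + Im_mat S)
                    (Im_mat A + Im_mat S) (Re_mat A - Re_mat S)))"

definition Sigma_mat :: "complex^('m::finite + 'm)^('m + 'm) \<Rightarrow> real \<Rightarrow> real^('m + 'm)^('m + 'm)" where
  "Sigma_mat \<eta> N = ((2 * N + 1) / 4) *\<^sub>R (G \<eta> ** transpose (G \<eta>)) + (1/4) *\<^sub>R mat 1"

definition mu :: "complex^'m::finite \<Rightarrow> real^('m + 'm)" where
  "mu \<theta> = (\<chi> a. case a of Inl i \<Rightarrow> Re (\<theta> $ i) | Inr i \<Rightarrow> Im (\<theta> $ i))"

end

theory Submission
  imports Defs
begin

text \<open>Take the pure squeezing \<open>\<eta> = [[0, S], [S\<^sup>*, 0]]\<close> with the rank-one symmetric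
  \<open>S = (ln r / \<parallel>\<theta>\<parallel>\<^sup>2) \<theta> \<theta>\<^sup>t\<close>. In the real coordinates \<open>mu\<close>, the generator of \<open>G \<eta>\<close> is the
  symmetric real matrix of the antilinear map \<open>w \<mapsto> S w\<^sup>*\<close>, and \<open>S \<theta>\<^sup>* = (ln r) \<theta>\<close>.
  So \<open>mu \<theta>\<close> is an eigenvector of \<open>G \<eta>\<close> and of its transpose with eigenvalue \<open>r\<close>, hence of
  \<open>Sigma_mat \<eta> N\<close> with eigenvalue \<open>((2N+1) r\<^sup>2 + 1) / 4\<close>, and the quadratic form equals
  \<open>r\<^sup>2 \<parallel>\<theta>\<parallel>\<^sup>2 \<cdot> 4 / ((2N+1) r\<^sup>2 + 1)\<close>.\<close>

lemma mat_pow_Suc_right: "mat_pow M (Suc k) = mat_pow M k ** M"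
  by (induction k) (simp_all add: matrix_mul_assoc)

lemma transpose_mat_pow:
  fixes M :: "'a::comm_semiring_1^'n::finite^'n"
  shows "transpose (mat_pow M k) = mat_pow (transpose M) k"
  by (induction k) (simp_all add: matrix_transpose_mul, metis mat_pow.simps(2) mat_pow_Suc_right)

lemma mat_pow_eigenvector:
  fixes M :: "real^'n::finite^'n"
  assumes "M *v v = s *\<^sub>R v"
  shows "mat_pow M k *v v = s^k *\<^sub>R v"
  by (induction k) (simp_all add: matrix_vector_mul_assoc[symmetric] matrix_vector_mult_scaleR assms)

lemma onorm_mat_pow_le:
  fixes M :: "real^'n::finite^'n"
  shows "onorm ((*v) (mat_pow M k)) \<le> onorm ((*v) M) ^ k"
proof (induction k)
  case 0
  show ?case using onorm_id_le by simp
next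
  case (Suc k)
  have "onorm ((*v) (mat_pow M (Suc k))) = onorm ((*v) M \<circ> (*v) (mat_pow M k))"
    by (simp add: o_def matrix_vector_mul_assoc)
  also have "\<dots> \<le> onorm ((*v) M) * onorm ((*v) (mat_pow M k))"
    by (intro onorm_compose matrix_vector_mul_bounded_linear)
  also have "\<dots> \<le> onorm ((*v) M) ^ Suc k"
    using Suc by (simp add: mult_left_mono onorm_pos_le matrix_vector_mul_bounded_linear)
  finally show ?case .
qed

lemma norm_matrix_le_onorm:
  fixes A :: "real^'n::finite^'m::finite"
  shows "norm A \<le> real CARD('m) * real CARD('n) * onorm ((*v) A)"
proof -
  have "norm A \<le> (\<Sum>i\<in>UNIV. norm (A $ i))"
    by (simp add: norm_vec_def L2_set_le_sum)
  also have "\<dots> \<le> (\<Sum>i\<in>UNIV. \<Sum>j\<in>UNIV. \<bar>A $ i $ j\<bar>)"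
    by (intro sum_mono norm_le_l1_cart)
  also have "\<dots> \<le> (\<Sum>i\<in>(UNIV::'m set). \<Sum>j\<in>(UNIV::'n set). onorm ((*v) A))"
    by (intro sum_mono matrix_component_le_onorm)
  finally show ?thesis by simp
qed

lemma summable_mat_exp:
  fixes M :: "real^'n::finite^'n"
  shows "summable (\<lambda>k. (1 / fact k) *\<^sub>R mat_pow M k)"
proof -
  define C where "C = real CARD('n) * real CARD('n)"
  have bound: "norm ((1 / fact k) *\<^sub>R mat_pow M k) \<le> C * (onorm ((*v) M) ^ k / fact k)" for k
  proof -
    have "norm (mat_pow M k) \<le> C * onorm ((*v) (mat_pow M k))"
      using norm_matrix_le_onorm by (simp add: C_def)
    also have "\<dots> \<le> C * onorm ((*v) M) ^ k"
      by (intro mult_left_mono onorm_mat_pow_le) (simp add: C_def)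
    finally show ?thesis by (simp add: divide_right_mono)
  qed
  have majorant: "summable (\<lambda>k. C * (onorm ((*v) M) ^ k / fact k))"
    using exp_converges[of "onorm ((*v) M)"]
    by (intro summable_mult) (simp add: sums_iff divide_inverse mult.commute)
  show ?thesis
    using summable_comparison_test'[OF majorant bound] .
qed

lemma bounded_linear_matrix_vector_mult_left:
  "bounded_linear (\<lambda>A::real^'n::finite^'m::finite. A *v v)"
  unfolding linear_conv_bounded_linear[symmetric]
  by (simp add: linear_iff matrix_vector_mult_add_rdistrib scaleR_matrix_vector_assoc)

lemma mat_exp_eigenvector:
  fixes M :: "real^'n::finite^'n"
  assumes "M *v v = s *\<^sub>R v"
  shows "mat_exp M *v v = exp s *\<^sub>R v"
proof -
  have "mat_exp M *v v = (\<Sum>k. ((1 / fact k) *\<^sub>R mat_pow M k) *v v)"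
    unfolding mat_exp_def
    by (rule bounded_linear.suminf[OF bounded_linear_matrix_vector_mult_left summable_mat_exp])
  also have "\<dots> = (\<Sum>k. (s^k / fact k) *\<^sub>R v)"
    by (simp add: scaleR_matrix_vector_assoc[symmetric] mat_pow_eigenvector[OF assms])
  also have "\<dots> = exp s *\<^sub>R v"
    using sums_scaleR_left[OF exp_converges[of s], of v] by (simp add: sums_iff divide_inverse mult.commute)
  finally show ?thesis .
qed

lemma transpose_mat_exp:
  fixes M :: "real^'n::finite^'n"
  shows "transpose (mat_exp M) = mat_exp (transpose M)"
proof -
  have "bounded_linear (transpose :: real^'n^'n \<Rightarrow> real^'n^'n)"
    unfolding linear_conv_bounded_linear[symmetric]
    by (simp add: linear_iff transpose_scalar transpose_def vec_eq_iff)
  then show ?thesis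
    unfolding mat_exp_def
    by (simp add: bounded_linear.suminf[OF _ summable_mat_exp] transpose_scalar transpose_mat_pow)
qed

lemma matrix_inv_left:
  fixes A :: "real^'n::finite^'n"
  assumes "invertible A"
  shows "matrix_inv A ** A = mat 1"
  using assms unfolding invertible_def matrix_inv_def by (metis (mono_tags, lifting) someI_ex)

lemma matrix_inv_eigenvector:
  fixes A :: "real^'n::finite^'n"
  assumes "invertible A" and "A *v v = c *\<^sub>R v" and "c \<noteq> 0"
  shows "matrix_inv A *v v = inverse c *\<^sub>R v"
proof -
  have "v = A *v (inverse c *\<^sub>R v)"
    using assms(2,3) by (simp add: matrix_vector_mult_scaleR)
  then have "matrix_inv A *v v = (matrix_inv A ** A) *v (inverse c *\<^sub>R v)"
    by (metis matrix_vector_mul_assoc)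
  then show ?thesis
    using matrix_inv_left[OF assms(1)] by simp
qed

lemma invertible_gram_plus_id:
  fixes B :: "real^'n::finite^'n"
  assumes "a \<ge> 0" and "b > 0"
  shows "invertible (a *\<^sub>R (B ** transpose B) + b *\<^sub>R mat 1)"
  unfolding invertible_left_inverse matrix_left_invertible_ker
proof (intro allI impI)
  fix x
  assume "(a *\<^sub>R (B ** transpose B) + b *\<^sub>R mat 1) *v x = 0"
  then have "x \<bullet> ((a *\<^sub>R (B ** transpose B) + b *\<^sub>R mat 1) *v x) = 0"
    by simp
  moreover have "x \<bullet> ((a *\<^sub>R (B ** transpose B) + b *\<^sub>R mat 1) *v x)
      = a * ((transpose B *v x) \<bullet> (transpose B *v x)) + b * (x \<bullet> x)"
    by (simp add: matrix_vector_mult_add_rdistrib scaleR_matrix_vector_assoc[symmetric]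
        matrix_vector_mul_assoc[symmetric] inner_add_right dot_lmul_matrix[symmetric])
  moreover have "0 \<le> a * ((transpose B *v x) \<bullet> (transpose B *v x))"
    using assms(1) by simp
  ultimately have "x \<bullet> x \<le> 0"
    using assms(2) by (smt (verit) mult_pos_pos inner_ge_zero)
  then show "x = 0"
    by (metis inner_eq_zero_iff inner_ge_zero order_antisym)
qed

lemma Sigma_mat_inv_eigenvector:
  assumes "N \<ge> 0" and "G \<eta> *v v = r *\<^sub>R v" and "transpose (G \<eta>) *v v = r *\<^sub>R v"
  shows "matrix_inv (Sigma_mat \<eta> N) *v v = (4 / ((2 * N + 1) * r^2 + 1)) *\<^sub>R v"
proof -
  have "Sigma_mat \<eta> N *v v = (((2 * N + 1) * r^2 + 1) / 4) *\<^sub>R v"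
    using assms(2,3)
    by (simp add: Sigma_mat_def matrix_vector_mult_add_rdistrib scaleR_matrix_vector_assoc[symmetric]
        matrix_vector_mul_assoc[symmetric] matrix_vector_mult_scaleR power2_eq_square algebra_simps)
       (simp add: scaleR_left_distrib[symmetric] add_divide_distrib)
  moreover have "invertible (Sigma_mat \<eta> N)"
    unfolding Sigma_mat_def using assms(1) by (intro invertible_gram_plus_id) simp_all
  moreover have "0 < (2 * N + 1) * r^2 + 1"
    using assms(1) by (intro add_nonneg_pos mult_nonneg_nonneg) simp_all
  ultimately show ?thesis
    using matrix_inv_eigenvector[of "Sigma_mat \<eta> N" v "((2 * N + 1) * r^2 + 1) / 4"] by simp
qed

lemma sum_UNIV_Plus:
  "sum f (UNIV :: ('a::finite + 'b::finite) set) = (\<Sum>i\<in>UNIV. f (Inl i)) + (\<Sum>j\<in>UNIV. f (Inr j))"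
  using sum.Plus[of "UNIV :: 'a set" "UNIV :: 'b set" f] by (simp add: comp_def)

definition cnj_vec :: "complex^'m::finite \<Rightarrow> complex^'m" where
  "cnj_vec w = (\<chi> i. cnj (w $ i))"

definition antilinear_mat :: "complex^'m::finite^'m \<Rightarrow> real^('m + 'm)^('m + 'm)" where
  "antilinear_mat S = block (Re_mat S) (Im_mat S) (Im_mat S) (- Re_mat S)"

lemma antilinear_mat_entry:
  "antilinear_mat S $ Inl i $ Inl j = Re (S $ i $ j)"
  "antilinear_mat S $ Inl i $ Inr j = Im (S $ i $ j)"
  "antilinear_mat S $ Inr i $ Inl j = Im (S $ i $ j)"
  "antilinear_mat S $ Inr i $ Inr j = - Re (S $ i $ j)"
  by (simp_all add: antilinear_mat_def block_def Re_mat_def Im_mat_def)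

lemma antilinear_mat_mu: "antilinear_mat S *v mu w = mu (S *v cnj_vec w)"
proof -
  have "(antilinear_mat S *v mu w) $ a = mu (S *v cnj_vec w) $ a" for a
    by (cases a)
       (simp_all add: antilinear_mat_entry mu_def cnj_vec_def matrix_vector_mult_def sum_UNIV_Plus
         sum.distrib sum_subtractf sum_negf)
  then show ?thesis
    by (simp add: vec_eq_iff)
qed

lemma transpose_antilinear_mat:
  assumes "symmetric_mat S"
  shows "transpose (antilinear_mat S) = antilinear_mat S"
proof -
  have S_sym: "S $ j $ i = S $ i $ j" for i j
    using arg_cong[OF assms[unfolded symmetric_mat_def], of "\<lambda>T. T $ i $ j"]
    by (simp add: transpose_def)
  have "transpose (antilinear_mat S) $ a $ b = antilinear_mat S $ a $ b" for a b
    by (cases a; cases b) (simp_all add: transpose_def antilinear_mat_entry S_sym)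
  then show ?thesis
    by (simp add: vec_eq_iff)
qed

definition squeeze :: "complex^'m::finite^'m \<Rightarrow> complex^('m + 'm)^('m + 'm)" where
  "squeeze S = block 0 S (cnj_mat S) (cnj_mat 0)"

lemma squeeze_in_Sqz: "symmetric_mat S \<Longrightarrow> squeeze S \<in> Sqz"
  unfolding Sqz_def squeeze_def anti_hermitian_def
  by (intro CollectI exI[of _ 0] exI[of _ S]) simp

lemma G_squeeze:
  fixes S :: "complex^'m::finite^'m"
  shows "G (squeeze S) = mat_exp (antilinear_mat S)"
proof -
  have "blkA (squeeze S) = 0" and "blkS (squeeze S) = S"
    by (simp_all add: blkA_def blkS_def squeeze_def block_def vec_eq_iff)
  moreover have "Re_mat (0 :: complex^'m^'m) = 0" and "Im_mat (0 :: complex^'m^'m) = 0"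
    by (simp_all add: Re_mat_def Im_mat_def vec_eq_iff)
  ultimately show ?thesis
    by (simp add: G_def antilinear_mat_def)
qed

lemma mu_scaleR: "mu (c *\<^sub>R w) = c *\<^sub>R mu w"
  by (simp add: mu_def vec_eq_iff split: sum.split)

lemma G_squeeze_eigenvector:
  assumes "symmetric_mat S" and "S *v cnj_vec w = s *\<^sub>R w"
  shows "G (squeeze S) *v mu w = exp s *\<^sub>R mu w"
    and "transpose (G (squeeze S)) *v mu w = exp s *\<^sub>R mu w"
proof -
  have "antilinear_mat S *v mu w = s *\<^sub>R mu w"
    using assms(2) by (simp add: antilinear_mat_mu mu_scaleR)
  then show "G (squeeze S) *v mu w = exp s *\<^sub>R mu w"
    and "transpose (G (squeeze S)) *v mu w = exp s *\<^sub>R mu w"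
    by (simp_all add: G_squeeze transpose_mat_exp transpose_antilinear_mat[OF assms(1)]
        mat_exp_eigenvector)
qed

lemma norm_mu: "norm (mu w) = norm w"
  unfolding norm_vec_def L2_set_def
  by (simp add: mu_def sum_UNIV_Plus sum.distrib cmod_power2)

lemma outer_mult_cnj_vec:
  "(\<chi> i j. of_real c * w $ i * w $ j) *v cnj_vec w = (c * (norm w)^2) *\<^sub>R w"
proof -
  have norm_sq: "(\<Sum>j\<in>UNIV. w $ j * cnj (w $ j)) = of_real ((norm w)^2)"
    by (simp add: norm_vec_def L2_set_def complex_mult_cnj cmod_power2 sum_nonneg)
  have component: "((\<chi> i j. of_real c * w $ i * w $ j) *v cnj_vec w) $ i
      = of_real c * w $ i * (\<Sum>j\<in>UNIV. w $ j * cnj (w $ j))" for i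
    by (simp add: matrix_vector_mult_def cnj_vec_def sum_distrib_left mult.assoc)
  show ?thesis
    unfolding vec_eq_iff vector_scaleR_component component norm_sq
    by (simp add: scaleR_conv_of_real)
qed

theorem lemma31:
  fixes r N :: real and \<theta> :: "complex^'m::finite"
  assumes "r > 0" and "\<theta> \<noteq> 0" and "N \<ge> 0"
  shows "\<exists>\<eta>\<in>(Sqz :: (complex^('m + 'm)^('m + 'm)) set).
           (G \<eta> *v mu \<theta>) \<bullet> (matrix_inv (Sigma_mat \<eta> N) *v (G \<eta> *v mu \<theta>))
             = 4 * r^2 * (norm \<theta>)^2 / ((2 * N + 1) * r^2 + 1)"
proof
  define S :: "complex^'m^'m" where "S = (\<chi> i j. of_real (ln r / (norm \<theta>)^2) * \<theta> $ i * \<theta> $ j)"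
  have S_symmetric: "symmetric_mat S"
    by (simp add: S_def symmetric_mat_def transpose_def vec_eq_iff mult.commute mult.left_commute)
  then show "squeeze S \<in> Sqz"
    by (rule squeeze_in_Sqz)
  have S_conj_eigen: "S *v cnj_vec \<theta> = ln r *\<^sub>R \<theta>"
    unfolding S_def outer_mult_cnj_vec using assms(2) by simp
  have G_eigen: "G (squeeze S) *v mu \<theta> = r *\<^sub>R mu \<theta>"
    and Gt_eigen: "transpose (G (squeeze S)) *v mu \<theta> = r *\<^sub>R mu \<theta>"
    using G_squeeze_eigenvector[OF S_symmetric S_conj_eigen] assms(1) by simp_all
  define d where "d = (2 * N + 1) * r^2 + 1"
  have inv_eigen: "matrix_inv (Sigma_mat (squeeze S) N) *v (r *\<^sub>R mu \<theta>)
      = (r * (4 / d)) *\<^sub>R mu \<theta>"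
    unfolding matrix_vector_mult_scaleR d_def
      Sigma_mat_inv_eigenvector[OF assms(3) G_eigen Gt_eigen]
    by simp
  have "mu \<theta> \<bullet> mu \<theta> = (norm \<theta>)^2"
    by (simp add: power2_norm_eq_inner[symmetric] norm_mu)
  then show "(G (squeeze S) *v mu \<theta>) \<bullet> (matrix_inv (Sigma_mat (squeeze S) N) *v (G (squeeze S) *v mu \<theta>))
      = 4 * r^2 * (norm \<theta>)^2 / ((2 * N + 1) * r^2 + 1)"
    unfolding G_eigen inv_eigen d_def[symmetric] by (simp add: power2_eq_square)
qed

end
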